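(* Let $\gamma(X,R)$ be a time-series constraint of the family $\mathrm{nb}\_\sigma$ or $\mathrm{sum\_width}\_\sigma$ that satisfies the gap-to-loss, boundedness and disjointedness conditions, and let $\delta\in\mathbb{N}$. Then for every ground time series $X$, $\mathrm{Gap}_\gamma(X)=\delta$ if and only if $\mathrm{Loss}_\gamma(X)$ belongs to the loss interval $L(\delta,\mathrm{sgn}(R))$, where $R$ is the value yielded by $X$.
   Context: Signature of $X=\langle X_1,\dots,X_n\rangle$: the word $\langle S_1,\dots,S_{n-1}\rangle$ over $\{<,=,>\}$ with $S_i$ given by comparing $X_i$ and $X_{i+1}$. For a regular expression $\sigma$ over $\{<,=,>\}$ with integer constants $b_\sigma,a_\sigma$, whenever $\langle S_i,\dots,S_j\rangle$ is a maximal word matching $\sigma$, $\langle X_{i+b_\sigma},\dots,X_{j+1-a_\sigma}\rangle$ is a $\sigma$-pattern; $\mathrm{nb}\_\sigma(X,R)$: $R$ is the number of $\sigma$-patterns; $\mathrm{sum\_width}\_\sigma(X,R)$: $R$ is the total number of elements of all $\sigma$-patterns (0 if none). A ground time series is a fixed non-empty integer sequence. Gap: $\mathrm{Gap}_\gamma(X)$ is the maximum value of $R$ over all time series of length $n$ minus the value of $R$ yielded by $X$. Loss: $\mathrm{Loss}_\gamma(X)$ is $n$ minus the length of a shortest time series yielding the same value of $R$ as $X$. $\mathrm{sgn}$ is the signum function. Gap-to-loss condition: there is a function $h$ with $\mathrm{Loss}_\gamma(X)=h(\mathrm{Gap}_\gamma(X),\mathrm{sgn}(R),n)$ for every ground time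 series $X$ of length $n$. Boundedness condition: for every $\delta\in\mathbb{N}$ and $s\in\{0,1\}$ there is a bounded integer interval $L(\delta,s)$, called the loss interval w.r.t. $\langle\delta,s\rangle$, containing $h(\delta,s,n)$ for every $n\in\mathbb{N}$. Disjointedness condition: for each $s\in\{0,1\}$ and $\delta_1\neq\delta_2$, $L(\delta_1,s)\cap L(\delta_2,s)=\emptyset$. *)

theory Defs
  imports Main
begin

datatype sign = Lt | Eq | Gt

definition cmp :: "int \<Rightarrow> int \<Rightarrow> sign" where
  "cmp x y = (if x < y then Lt else if x = y then Eq else Gt)"

definition signature :: "int list \<Rightarrow> sign list" where
  "signature X = map (\<lambda>i. cmp (X ! i) (X ! Suc i)) [0..<length X - 1]"

datatype rexp = RZero | ROne | RAtom sign | RPlus rexp rexp | RTimes rexp rexp | RStar rexp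

inductive_set star_lang :: "sign list set \<Rightarrow> sign list set" for A where
  star_nil: "[] \<in> star_lang A"
| star_app: "u \<in> A \<Longrightarrow> v \<in> star_lang A \<Longrightarrow> u @ v \<in> star_lang A"

fun lang :: "rexp \<Rightarrow> sign list set" where
  "lang RZero = {}"
| "lang ROne = {[]}"
| "lang (RAtom c) = {[c]}"
| "lang (RPlus r s) = lang r \<union> lang s"
| "lang (RTimes r s) = {u @ v | u v. u \<in> lang r \<and> v \<in> lang s}"
| "lang (RStar r) = star_lang (lang r)"

definition matches :: "rexp \<Rightarrow> sign list \<Rightarrow> nat \<Rightarrow> nat \<Rightarrow> bool" where
  "matches \<sigma> S i j \<longleftrightarrow> i \<le> j \<and> j < length S \<and> take (Suc j - i) (drop i S) \<in> lang \<sigma>"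

definition occs :: "rexp \<Rightarrow> int list \<Rightarrow> (nat \<times> nat) set" where
  "occs \<sigma> X = {(i, j). matches \<sigma> (signature X) i j \<and>
      \<not> (\<exists>i' j'. i' \<le> i \<and> j \<le> j' \<and> (i', j') \<noteq> (i, j) \<and> matches \<sigma> (signature X) i' j')}"

text \<open>Number of elements of the pattern X_(i+b) ... X_(j+1-a).\<close>
definition width :: "int \<Rightarrow> int \<Rightarrow> nat \<times> nat \<Rightarrow> nat" where
  "width b a p = nat ((int (snd p) + 1 - a) - (int (fst p) + b) + 1)"

definition nb :: "rexp \<Rightarrow> int list \<Rightarrow> nat" where
  "nb \<sigma> X = card (occs \<sigma> X)"

definition sum_width :: "rexp \<Rightarrow> int \<Rightarrow> int \<Rightarrow> int list \<Rightarrow> nat" where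
  "sum_width \<sigma> b a X = (\<Sum>p\<in>occs \<sigma> X. width b a p)"

definition Gap :: "(int list \<Rightarrow> nat) \<Rightarrow> int list \<Rightarrow> int" where
  "Gap \<gamma> X = Max ((\<lambda>Y. int (\<gamma> Y)) ` {Y. length Y = length X}) - int (\<gamma> X)"

definition Loss :: "(int list \<Rightarrow> nat) \<Rightarrow> int list \<Rightarrow> int" where
  "Loss \<gamma> X = int (length X) - int (LEAST m. \<exists>Y. Y \<noteq> [] \<and> length Y = m \<and> \<gamma> Y = \<gamma> X)"

end

theory Submission
  imports Defs
begin

(* The gap is a natural number, because both constraint families depend on a series
  only through its set of maximal occurrences, which ranges over a finite set for a fixed
  length; so the maximum in the gap is attained and dominates the value of any series.
  Gap-to-loss together with boundedness then puts the loss of a series with gap d into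
  the loss interval of d, and disjointedness says it lies in no other loss interval. *)

lemma occs_subset: "occs \<sigma> X \<subseteq> {..<length X} \<times> {..<length X}"
  unfolding occs_def matches_def signature_def by auto

lemma finite_image_occs:
  fixes f :: "(nat \<times> nat) set \<Rightarrow> nat"
  shows "finite ((\<lambda>Y. int (f (occs \<sigma> Y))) ` {Y. length Y = n})"
proof (rule finite_subset)
  show "(\<lambda>Y. int (f (occs \<sigma> Y))) ` {Y. length Y = n}
          \<subseteq> (\<lambda>Z. int (f Z)) ` Pow ({..<n} \<times> {..<n})"
    using occs_subset by fastforce
qed simp

lemma finite_image_family:
  assumes "(\<exists>\<sigma>. \<gamma> = nb \<sigma>) \<or> (\<exists>\<sigma> b a. \<gamma> = sum_width \<sigma> b a)"
  shows "finite ((\<lambda>Y. int (\<gamma> Y)) ` {Y. length Y = n})"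
  using assms finite_image_occs[of card _ n] finite_image_occs[of "sum (width _ _)" _ n]
  unfolding nb_def sum_width_def by auto

lemma Gap_nonneg:
  assumes "finite ((\<lambda>Y. int (\<gamma> Y)) ` {Y. length Y = length X})"
  shows "0 \<le> Gap \<gamma> X"
proof -
  have "int (\<gamma> X) \<le> Max ((\<lambda>Y. int (\<gamma> Y)) ` {Y. length Y = length X})"
    using assms by (rule Max_ge) simp
  then show ?thesis unfolding Gap_def by simp
qed

lemma mem_disjoint_family_iff:
  assumes "x \<in> A d"
    and "\<And>d1 d2. d1 \<noteq> d2 \<Longrightarrow> A d1 \<inter> A d2 = {}"
  shows "x \<in> A d' \<longleftrightarrow> d = d'"
  using assms by blast

theorem lemma1:
  fixes \<gamma> :: "int list \<Rightarrow> nat"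
    and h :: "int \<Rightarrow> int \<Rightarrow> nat \<Rightarrow> int"
    and L :: "nat \<Rightarrow> int \<Rightarrow> int set"
    and \<delta> :: nat
  assumes family: "(\<exists>\<sigma>. \<gamma> = nb \<sigma>) \<or> (\<exists>\<sigma> b a. \<gamma> = sum_width \<sigma> b a)"
    and gap_to_loss: "\<forall>X. X \<noteq> [] \<longrightarrow> Loss \<gamma> X = h (Gap \<gamma> X) (sgn (int (\<gamma> X))) (length X)"
    and bounded: "\<forall>d s. s \<in> {0, 1} \<longrightarrow>
        (\<exists>lo hi. L d s = {lo..hi}) \<and> (\<forall>n. h (int d) s n \<in> L d s)"
    and disjoint: "\<forall>s d1 d2. s \<in> {0, 1} \<and> d1 \<noteq> d2 \<longrightarrow> L d1 s \<inter> L d2 s = {}"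
  shows "\<forall>X. X \<noteq> [] \<longrightarrow>
           (Gap \<gamma> X = int \<delta> \<longleftrightarrow> Loss \<gamma> X \<in> L \<delta> (sgn (int (\<gamma> X))))"
proof (intro allI impI)
  fix X :: "int list"
  assume "X \<noteq> []"
  define d where "d = nat (Gap \<gamma> X)"
  define s where "s = sgn (int (\<gamma> X))"
  have gap: "Gap \<gamma> X = int d"
    using Gap_nonneg[OF finite_image_family[OF family]] by (simp add: d_def)
  have s: "s \<in> {0, 1}"
    by (cases "\<gamma> X = 0") (auto simp: s_def)
  have "Loss \<gamma> X \<in> L d s"
    using gap_to_loss \<open>X \<noteq> []\<close> bounded s gap by (simp add: s_def)
  then have "Loss \<gamma> X \<in> L \<delta> s \<longleftrightarrow> d = \<delta>"
    by (rule mem_disjoint_family_iff) (use disjoint s in blast)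
  then show "Gap \<gamma> X = int \<delta> \<longleftrightarrow> Loss \<gamma> X \<in> L \<delta> (sgn (int (\<gamma> X)))"
    by (simp add: gap s_def)
qed

end
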